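(* Let $G=(V,D,B)$ be a mixed graph. For $\Lambda\in\mathbb{R}^D_{\mathrm{reg}}$ and $\Omega\in\mathit{PD}(B)$, let $\Sigma=\phi_G(\Lambda,\Omega)$. Then the rank of the Jacobian $J_G(\Lambda,\Omega)$ equals $\mathrm{rank}(\mathbf{J}(\Lambda,\Sigma))+|B|+|V|$.
   Context: A mixed graph with finite vertex set $V$ is a triple $G=(V,D,B)$ with $D$ a set of ordered pairs $(i,j)$, $i\ne j$ (directed edges $i\to j$) and $B$ a set of unordered pairs $\{i,j\}$, $i\ne j$ (bidirected edges). $\mathbb{R}^D_{\mathrm{reg}}$ is the set of real $V\times V$ matrices $\Lambda=(\lambda_{ij})$ with $\lambda_{ij}=0$ for $(i,j)\notin D$ and $I-\Lambda$ invertible; $\mathit{PD}(B)$ is the set of positive definite symmetric $V\times V$ matrices $\Omega$ with $\omega_{ij}=0$ for $i\neq j$, $\{i,j\}\notin B$. The covariance parametrization is $\phi_G:\mathbb{R}^D_{\mathrm{reg}}\times\mathit{PD}(B)\to\mathit{PD}$, $(\Lambda,\Omega)\mapsto (I-\Lambda)^{-T}\Omega(I-\Lambda)^{-1}$, and $J_G(\Lambda,\Omega)$ is its Jacobian with respect to the free parameters: the entries $\lambda_{kl}$, $(k,l)\in D$, the diagonal entries $\omega_{ii}$, $i\in V$, and the entries $\omega_{ij}$, $\{i,j\}\in B$ (with output the entries $\Sigma_{ij}$ indexed by unordered pairs/diagonal). Let $g(\Lambda,\Sigma)=(I-\Lambda)^T\Sigma(I-\Lambda)$ for $\Lambda\in\mathbb{R}^D_{\mathrm{reg}}$,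 $\Sigma$ positive definite, and let $N=\{\{i,j\}: i,j\in V, i\ne j, \{i,j\}\notin B\}$. Then $\mathbf{J}(\Lambda,\Sigma)$ is the $N\times D$ matrix with entries $\mathbf{J}(\Lambda,\Sigma)_{\{i,j\},(k,l)}=\partial g_{ij}(\Lambda,\Sigma)/\partial\lambda_{kl}$, for $\{i,j\}\in N$, $(k,l)\in D$. *)

theory Defs
  imports "HOL-Analysis.Analysis" "HOL-Library.Function_Algebras"
begin

text \<open>Vertex set V = UNIV of a finite type 'v. Directed edges D: ordered pairs;
  bidirected edges B: unordered pairs, represented as two-element sets {i,j}.\<close>

definition mixed_graph :: "('v \<times> 'v) set \<Rightarrow> 'v set set \<Rightarrow> bool" where
  "mixed_graph D B \<longleftrightarrow> (\<forall>(i,j)\<in>D. i \<noteq> j) \<and> (\<forall>e\<in>B. \<exists>i j. i \<noteq> j \<and> e = {i,j})"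

definition reg_D :: "('v::finite \<times> 'v) set \<Rightarrow> real^'v^'v \<Rightarrow> bool" where
  "reg_D D L \<longleftrightarrow> (\<forall>i j. (i,j) \<notin> D \<longrightarrow> L$i$j = 0) \<and> invertible (mat 1 - L)"

definition PD_B :: "'v::finite set set \<Rightarrow> real^'v^'v \<Rightarrow> bool" where
  "PD_B B W \<longleftrightarrow> transpose W = W \<and> (\<forall>x. x \<noteq> 0 \<longrightarrow> x \<bullet> (W *v x) > 0)
     \<and> (\<forall>i j. i \<noteq> j \<and> {i,j} \<notin> B \<longrightarrow> W$i$j = 0)"

definition phi :: "real^'v::finite^'v \<Rightarrow> real^'v^'v \<Rightarrow> real^'v^'v" where
  "phi L W = transpose (matrix_inv (mat 1 - L)) ** W ** matrix_inv (mat 1 - L)"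

definition gmap :: "real^'v::finite^'v \<Rightarrow> real^'v^'v \<Rightarrow> real^'v^'v" where
  "gmap L S = transpose (mat 1 - L) ** S ** (mat 1 - L)"

definition sym_entry :: "real^'v^'v \<Rightarrow> 'v set \<Rightarrow> real" where
  "sym_entry M e = (case (SOME (i,j). e = {i,j}) of (i,j) \<Rightarrow> M$i$j)"

text \<open>free parameters: lambda_kl for (k,l) in D (Inl), omega_ii (Inr {i}), omega_ij for {i,j} in B (Inr {i,j})\<close>
definition params :: "('v \<times> 'v) set \<Rightarrow> 'v set set \<Rightarrow> (('v \<times> 'v) + 'v set) set" where
  "params D B = Inl ` D \<union> Inr ` ({{i} | i. True} \<union> B)"

definition Lam_of :: "('v::finite \<times> 'v) set \<Rightarrow> (('v \<times> 'v) \<Rightarrow> real) \<Rightarrow> real^'v^'v" where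
  "Lam_of D \<theta> = (\<chi> i j. if (i,j) \<in> D then \<theta> (i,j) else 0)"

definition Om_of :: "'v::finite set set \<Rightarrow> ('v set \<Rightarrow> real) \<Rightarrow> real^'v^'v" where
  "Om_of B \<theta> = (\<chi> i j. if i = j \<or> {i,j} \<in> B then \<theta> {i,j} else 0)"

definition phi_G :: "('v::finite \<times> 'v) set \<Rightarrow> 'v set set \<Rightarrow> (('v \<times> 'v) + 'v set \<Rightarrow> real) \<Rightarrow> real^'v^'v" where
  "phi_G D B \<theta> = phi (Lam_of D (\<lambda>p. \<theta> (Inl p))) (Om_of B (\<lambda>e. \<theta> (Inr e)))"

definition theta_of :: "real^'v::finite^'v \<Rightarrow> real^'v^'v \<Rightarrow> ('v \<times> 'v) + 'v set \<Rightarrow> real" where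
  "theta_of L W p = (case p of Inl (k,l) \<Rightarrow> L$k$l | Inr e \<Rightarrow> sym_entry W e)"

definition partial :: "(('p \<Rightarrow> real) \<Rightarrow> real) \<Rightarrow> ('p \<Rightarrow> real) \<Rightarrow> 'p \<Rightarrow> real" where
  "partial F \<theta> p = deriv (\<lambda>t. F (\<theta>(p := t))) (\<theta> p)"

text \<open>Jacobian J_G(Lambda,Omega): rows = entries Sigma_{ij} (unordered pairs / diagonal), columns = free parameters\<close>
definition J_G :: "('v::finite \<times> 'v) set \<Rightarrow> 'v set set \<Rightarrow> real^'v^'v \<Rightarrow> real^'v^'v
                   \<Rightarrow> 'v set \<Rightarrow> ('v \<times> 'v) + 'v set \<Rightarrow> real" where
  "J_G D B L W e p = partial (\<lambda>\<theta>. sym_entry (phi_G D B \<theta>) e) (theta_of L W) p"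

definition sigma_idx :: "'v set set" where
  "sigma_idx = {{i,j} | i j. True}"

definition N_idx :: "'v set set \<Rightarrow> 'v set set" where
  "N_idx B = {{i,j} | i j. i \<noteq> j \<and> {i,j} \<notin> B}"

definition bJ :: "('v::finite \<times> 'v) set \<Rightarrow> real^'v^'v \<Rightarrow> real^'v^'v \<Rightarrow> 'v set \<Rightarrow> ('v \<times> 'v) \<Rightarrow> real" where
  "bJ D L S e q = partial (\<lambda>\<theta>. sym_entry (gmap (Lam_of D \<theta>) S) e) (\<lambda>(k,l). L$k$l) q"

definition mat_rank :: "'r set \<Rightarrow> 'c set \<Rightarrow> ('r \<Rightarrow> 'c \<Rightarrow> real) \<Rightarrow> nat" where
  "mat_rank R C M = vector_space.dim (\<lambda>a f x. a * f x) ((\<lambda>c r. if r \<in> R then M r c else 0) ` C)"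

end

(* With X = (I - Lambda)^-1 and Sigma = X^T Omega X, moving lambda_kl by s turns X into
   X + r(s) X E_kl X with r(s) = s / (1 - s X_lk) (a rank-one update of the inverse), so the
   lambda_kl-column of J_G is X^T K_kl X with K_kl = E_kl^T Sigma (I - Lambda) + (I - Lambda)^T Sigma E_kl,
   and the omega_e-column is X^T F_e X for the symmetric unit matrix F_e. Congruence by the invertible
   X is a linear automorphism of the symmetric matrices, so J_G has the rank of the family of the
   K_kl and F_e. In coordinates the F_e are the unit vectors at the diagonal positions and at B,
   while on the remaining positions N the K_kl are exactly the negated columns of bold J, since
   dg/dlambda_kl = -K_kl. Splitting the coordinates accordingly gives |V| + |B| + rank(bold J). *)

theory Submission
  imports Defs
begin

section \<open>Real functions on a finite type as a vector space\<close>

(* The scaling is the one in mat_rank_def, so fun_space.dim is literally the dimension used there. *)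
interpretation fun_space: vector_space "\<lambda>(a::real) (f::'a \<Rightarrow> real) x. a * f x"
  by unfold_locales (auto simp: fun_eq_iff algebra_simps)

lemma sum_fun_apply: "(\<Sum>i\<in>A. g i) x = (\<Sum>i\<in>A. g i x)"
  by (induction A rule: infinite_finite_induct) auto

lemma inj_indicator_singleton: "inj (\<lambda>e. indicator {e} :: 'a \<Rightarrow> real)"
  by (rule injI) (metis fun_cong indicator_simps singletonD singletonI zero_neq_one)

lemma independent_indicators:
  assumes "finite S"
  shows "fun_space.independent ((\<lambda>e. indicator {e} :: 'a \<Rightarrow> real) ` S)"
proof -
  have "u (indicator {e}) = 0"
    if sum0: "(\<Sum>v\<in>(\<lambda>e. indicator {e}) ` S. (\<lambda>x. u v * v x)) = 0" and e: "e \<in> S"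
    for u :: "('a \<Rightarrow> real) \<Rightarrow> real" and e
  proof -
    have "0 = (\<Sum>d\<in>S. u (indicator {d}) * indicator {d} e)"
      using fun_cong[OF sum0, of e] by (simp add: sum_fun_apply sum.reindex inj_on_subset[OF inj_indicator_singleton])
    also have "\<dots> = u (indicator {e})"
      using assms e by (simp add: indicator_def sum.delta)
    finally show ?thesis by simp
  qed
  then show ?thesis
    using assms by (subst fun_space.dependent_finite) auto
qed

lemma span_indicators_UNIV:
  "fun_space.span (range (\<lambda>e. indicator {e})) = (UNIV :: ('a::finite \<Rightarrow> real) set)"
proof safe
  fix f :: "'a \<Rightarrow> real"
  have "f = (\<Sum>e\<in>UNIV. (\<lambda>x. f e * indicator {e} x))"
    by (simp add: fun_eq_iff sum_fun_apply indicator_def)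
  also have "\<dots> \<in> fun_space.span (range (\<lambda>e. indicator {e}))"
    by (intro fun_space.span_sum fun_space.span_scale fun_space.span_base) auto
  finally show "f \<in> fun_space.span (range (\<lambda>e. indicator {e}))" .
qed auto

interpretation fun_space: finite_dimensional_vector_space
  "\<lambda>(a::real) (f::'a::finite \<Rightarrow> real) x. a * f x" "range (\<lambda>e. indicator {e})"
  by unfold_locales (simp_all add: independent_indicators span_indicators_UNIV)

interpretation fun_space_pair: finite_dimensional_vector_space_pair_1
  "\<lambda>(a::real) (f::'a::finite \<Rightarrow> real) x. a * f x" "range (\<lambda>e. indicator {e})"
  "\<lambda>(a::real) (f::'b \<Rightarrow> real) x. a * f x"
  by unfold_locales

abbreviation fun_linear :: "(('a \<Rightarrow> real) \<Rightarrow> ('b \<Rightarrow> real)) \<Rightarrow> bool" where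
  "fun_linear \<equiv> Vector_Spaces.linear (\<lambda>a f x. a * f x) (\<lambda>a f x. a * f x)"

lemma fun_linearI:
  fixes h :: "('a \<Rightarrow> real) \<Rightarrow> ('b \<Rightarrow> real)"
  assumes "\<And>f g. h (f + g) = h f + h g" and "\<And>a f. h (\<lambda>x. a * f x) = (\<lambda>y. a * h f y)"
  shows "fun_linear h"
  using assms fun_space.vector_space_axioms[where 'a='a] fun_space.vector_space_axioms[where 'a='b]
  unfolding linear_iff_module_hom module_hom_def module_hom_axioms_def module_iff_vector_space
  by auto

lemma dim_image_eq_left_inverse:
  fixes h :: "('a::finite \<Rightarrow> real) \<Rightarrow> ('b::finite \<Rightarrow> real)"
  assumes "fun_linear h" "fun_linear h'" "\<And>f. f \<in> S \<Longrightarrow> h' (h f) = f"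
  shows "fun_space.dim (h ` S) = fun_space.dim S"
proof (rule antisym)
  show "fun_space.dim (h ` S) \<le> fun_space.dim S"
    using fun_space_pair.dim_image_le[OF assms(1)] .
  have "h' ` h ` S = S"
    using assms(3) by force
  then show "fun_space.dim S \<le> fun_space.dim (h ` S)"
    using fun_space_pair.dim_image_le[OF assms(2), of "h ` S"] by simp
qed

lemma span_supported_subset:
  assumes "\<And>f x. f \<in> F \<Longrightarrow> x \<notin> A \<Longrightarrow> f x = 0"
  shows "fun_space.span F \<subseteq> {f. \<forall>x. x \<notin> A \<longrightarrow> f x = 0}"
  by (rule fun_space.span_minimal) (use assms in \<open>auto simp: fun_space.subspace_def\<close>)

lemma dim_indicators_Un:
  fixes P N :: "'a::finite set" and K :: "('a \<Rightarrow> real) set"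
  assumes disj: "P \<inter> N = {}"
    and supp: "\<And>k x. k \<in> K \<Longrightarrow> x \<notin> P \<union> N \<Longrightarrow> k x = 0"
  shows "fun_space.dim ((\<lambda>e. indicator {e}) ` P \<union> K)
           = card P + fun_space.dim ((\<lambda>k x. if x \<in> N then k x else 0) ` K)"
proof -
  define I where "I = (\<lambda>e. indicator {e} :: 'a \<Rightarrow> real) ` P"
  define res where "res = (\<lambda>(k::'a \<Rightarrow> real) x. if x \<in> N then k x else 0)"
  have k_split: "k = res k + (\<Sum>e\<in>P. (\<lambda>x. k e * indicator {e} x))" if "k \<in> K" for k
    using supp[OF that] disj by (auto simp: fun_eq_iff res_def sum_fun_apply indicator_def Int_insert_right)
  have "k \<in> fun_space.span (I \<union> res ` K)" "res k \<in> fun_space.span (I \<union> K)" if "k \<in> K" for k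
  proof -
    let ?s = "\<Sum>e\<in>P. (\<lambda>x. k e * indicator {e} x)"
    have "?s \<in> fun_space.span I"
      unfolding I_def by (intro fun_space.span_sum fun_space.span_scale fun_space.span_base) auto
    moreover have "fun_space.span I \<subseteq> fun_space.span (I \<union> X)" for X
      by (rule fun_space.span_mono) auto
    ultimately have s1: "?s \<in> fun_space.span (I \<union> res ` K)"
      and s2: "?s \<in> fun_space.span (I \<union> K)"
      by blast+
    have "res k + ?s \<in> fun_space.span (I \<union> res ` K)"
      using that by (intro fun_space.span_add s1 fun_space.span_base) auto
    then show "k \<in> fun_space.span (I \<union> res ` K)"
      using k_split[OF that] by simp
    have "k - ?s \<in> fun_space.span (I \<union> K)"
      using that by (intro fun_space.span_diff s2 fun_space.span_base) auto
    moreover have "res k = k - ?s"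
      using k_split[OF that] by (simp add: eq_diff_eq)
    ultimately show "res k \<in> fun_space.span (I \<union> K)"
      by simp
  qed
  then have "fun_space.span (I \<union> K) = fun_space.span (I \<union> res ` K)"
    unfolding fun_space.span_eq by (auto intro: fun_space.span_base)
  then have span_eq:
    "fun_space.span (I \<union> K) = {x + y | x y. x \<in> fun_space.span I \<and> y \<in> fun_space.span (res ` K)}"
    by (simp only: fun_space.span_Un)
  have "fun_space.span I \<inter> fun_space.span (res ` K) \<subseteq> {0}"
  proof -
    have "fun_space.span I \<subseteq> {f. \<forall>x. x \<notin> P \<longrightarrow> f x = 0}"
      by (rule span_supported_subset) (auto simp: I_def indicator_def)
    moreover have "fun_space.span (res ` K) \<subseteq> {f. \<forall>x. x \<notin> N \<longrightarrow> f x = 0}"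
      by (rule span_supported_subset) (auto simp: res_def)
    ultimately show ?thesis
      using disj by (fastforce simp: fun_eq_iff)
  qed
  then have "fun_space.dim (fun_space.span I \<inter> fun_space.span (res ` K)) = 0"
    by (simp only: fun_space.dim_eq_0)
  moreover have "fun_space.dim (I \<union> K) + fun_space.dim (fun_space.span I \<inter> fun_space.span (res ` K))
      = fun_space.dim I + fun_space.dim (res ` K)"
    using fun_space.dim_sums_Int[of "fun_space.span I" "fun_space.span (res ` K)"]
    by (simp only: span_eq[symmetric] fun_space.subspace_span fun_space.dim_span)
  ultimately have "fun_space.dim (I \<union> K) = fun_space.dim I + fun_space.dim (res ` K)"
    by linarith
  also have "fun_space.dim I = card P"
    by (simp add: I_def fun_space.dim_eq_card_independent independent_indicators
        card_image inj_on_subset[OF inj_indicator_singleton])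
  finally show ?thesis by (simp add: I_def res_def)
qed

lemma matrix_add_rdistrib: "((A::'a::ring_1^'n^'m) + B) ** C = A ** C + B ** C"
  by (simp add: matrix_matrix_mult_def vec_eq_iff sum.distrib algebra_simps)

lemma matrix_diff_ldistrib: "(A::'a::ring_1^'n^'m) ** (B - C) = A ** B - A ** C"
  by (simp add: matrix_matrix_mult_def vec_eq_iff sum_subtractf algebra_simps)

lemma matrix_diff_rdistrib: "((A::'a::ring_1^'n^'m) - B) ** C = A ** C - B ** C"
  by (simp add: matrix_matrix_mult_def vec_eq_iff sum_subtractf algebra_simps)

lemma transpose_add: "transpose (A + B) = transpose A + transpose (B::'a::ring_1^'n^'m)"
  by (simp add: transpose_def vec_eq_iff)

lemma transpose_diff: "transpose (A - B) = transpose A - transpose (B::'a::ring_1^'n^'m)"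
  by (simp add: transpose_def vec_eq_iff)

lemma matrix_inv_right: "invertible A \<Longrightarrow> A ** matrix_inv A = mat 1"
  and matrix_inv_left: "invertible A \<Longrightarrow> matrix_inv A ** A = mat 1"
  for A :: "'a::semiring_1^'n^'n"
  unfolding invertible_def matrix_inv_def by (metis (mono_tags, lifting) someI_ex)+

lemma invertible_matrix_inv: "invertible A \<Longrightarrow> invertible (matrix_inv A)"
  for A :: "'a::semiring_1^'n^'n"
  by (meson invertible_def matrix_inv_left matrix_inv_right)

lemma matrix_inv_unique:
  fixes A B :: "'a::field^'n^'n"
  assumes "A ** B = mat 1"
  shows "matrix_inv A = B"
proof -
  have BA: "B ** A = mat 1"
    using assms matrix_left_right_inverse by blast
  then have "invertible A"
    using assms invertible_def by blast
  then have "B = B ** (A ** matrix_inv A)"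
    by (simp add: matrix_inv_right)
  also have "\<dots> = matrix_inv A"
    by (simp add: matrix_mul_assoc BA)
  finally show ?thesis by simp
qed

lemma congruence_symmetric:
  fixes M Y :: "'a::comm_semiring_1^'n^'n"
  shows "transpose M = M \<Longrightarrow> transpose (transpose Y ** M ** Y) = transpose Y ** M ** Y"
  by (simp add: matrix_transpose_mul matrix_mul_assoc)

definition unit_mat :: "'n \<Rightarrow> 'n \<Rightarrow> real^'n^'n" where
  "unit_mat k l = (\<chi> i j. if i = k \<and> j = l then 1 else 0)"

lemma unit_mat_mult_nth: "(unit_mat k l ** M)$i$j = (if i = k then M$l$j else 0)"
  by (cases "i = k")
    (simp_all add: matrix_matrix_mult_def unit_mat_def if_distrib[of "\<lambda>x. x * _"] cong: if_cong)

lemma mult_unit_mat_nth: "(M ** unit_mat k l)$i$j = (if j = l then M$i$k else 0)"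
  by (cases "j = l")
    (simp_all add: matrix_matrix_mult_def unit_mat_def if_distrib[of "\<lambda>x. _ * x"] cong: if_cong)

lemma unit_mat_mult_unit_mat: "unit_mat k l ** M ** unit_mat k l = M$l$k *\<^sub>R unit_mat k l"
  by (simp add: vec_eq_iff mult_unit_mat_nth unit_mat_mult_nth) (simp add: unit_mat_def)

section \<open>Symmetric matrices as functions of unordered pairs\<close>

lemma sigma_idxE:
  assumes "e \<in> sigma_idx"
  obtains i j where "e = {i, j}" and "\<And>M. sym_entry M e = M$i$j"
proof -
  have "\<exists>p. case p of (i, j) \<Rightarrow> e = {i, j}"
    using assms by (auto simp: sigma_idx_def)
  from someI_ex[OF this] show ?thesis
    using that by (auto simp: sym_entry_def split: prod.splits)
qed

lemma doubleton_in_sigma_idx [simp]: "{i, j} \<in> sigma_idx"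
  by (auto simp: sigma_idx_def)

lemma sym_entry_add: "sym_entry (M + N) e = sym_entry M e + sym_entry N e"
  by (simp add: sym_entry_def split: prod.split)

lemma sym_entry_scaleR: "sym_entry (c *\<^sub>R M) e = c * sym_entry M e"
  by (simp add: sym_entry_def split: prod.split)

lemma sym_entry_diff: "sym_entry (M - N) e = sym_entry M e - sym_entry N e"
  by (simp add: sym_entry_def split: prod.split)

lemma sym_entry_symmetric:
  assumes "transpose M = M"
  shows "sym_entry M {i, j} = M$i$j"
proof -
  obtain a b where ab: "{i, j} = {a, b}" "sym_entry M {i, j} = M$a$b"
    using sigma_idxE[OF doubleton_in_sigma_idx] by metis
  have "M$a$b = M$b$a"
    using assms by (metis transpose_def vec_lambda_beta)
  with ab show ?thesis
    by (auto simp: doubleton_eq_iff)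
qed

definition sym_mat :: "('v::finite set \<Rightarrow> real) \<Rightarrow> real^'v^'v" where
  "sym_mat f = (\<chi> i j. f {i, j})"

definition sym_entries :: "real^'v^'v \<Rightarrow> 'v set \<Rightarrow> real" where
  "sym_entries M e = (if e \<in> sigma_idx then sym_entry M e else 0)"

lemma sym_mat_add: "sym_mat (f + g) = sym_mat f + sym_mat g"
  by (simp add: sym_mat_def vec_eq_iff)

lemma sym_mat_scale: "sym_mat (\<lambda>e. a * f e) = a *\<^sub>R sym_mat f"
  by (simp add: sym_mat_def vec_eq_iff)

lemma transpose_sym_mat: "transpose (sym_mat f) = sym_mat f"
  by (simp add: sym_mat_def transpose_def vec_eq_iff insert_commute)

lemma sym_entry_sym_mat: "e \<in> sigma_idx \<Longrightarrow> sym_entry (sym_mat f) e = f e"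
  by (elim sigma_idxE) (simp add: sym_mat_def)

lemma sym_mat_sym_entries: "transpose M = M \<Longrightarrow> sym_mat (sym_entries M) = M"
  by (simp add: sym_mat_def sym_entries_def sym_entry_symmetric vec_eq_iff)

lemma sym_entries_sym_mat: "sym_entries (sym_mat f) = (\<lambda>e. if e \<in> sigma_idx then f e else 0)"
  by (simp add: fun_eq_iff sym_entries_def sym_entry_sym_mat)

lemma dim_sym_entries_congruence:
  fixes X :: "real^'v::finite^'v" and Ms :: "(real^'v^'v) set"
  assumes "invertible X" and sym: "\<And>M. M \<in> Ms \<Longrightarrow> transpose M = M"
  shows "fun_space.dim ((\<lambda>M. sym_entries (transpose X ** M ** X)) ` Ms) = fun_space.dim (sym_entries ` Ms)"
proof -
  define Y where "Y = matrix_inv X"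
  have congr_linear: "fun_linear (\<lambda>f. sym_entries (transpose Z ** sym_mat f ** Z))" for Z :: "real^'v^'v"
    by (rule fun_linearI)
      (simp_all add: fun_eq_iff sym_entries_def sym_mat_add sym_mat_scale sym_entry_add sym_entry_scaleR
        matrix_add_ldistrib matrix_add_rdistrib matrix_scalar_ac scalar_matrix_assoc[symmetric])
  have XY: "transpose Y ** transpose X = mat 1" "Z ** X ** Y = Z" for Z
    using matrix_inv_right[OF assms(1)]
    by (simp_all add: Y_def flip: matrix_transpose_mul matrix_mul_assoc)
  have "sym_entries (transpose Y ** sym_mat (sym_entries (transpose X ** M ** X)) ** Y) = sym_entries M"
    if "M \<in> Ms" for M
    by (simp add: sym_mat_sym_entries congruence_symmetric sym that matrix_mul_assoc XY)
  then have "fun_space.dim ((\<lambda>f. sym_entries (transpose X ** sym_mat f ** X)) ` sym_entries ` Ms)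
      = fun_space.dim (sym_entries ` Ms)"
    by (intro dim_image_eq_left_inverse[OF congr_linear congr_linear])
      (auto simp: sym_mat_sym_entries sym)
  then show ?thesis
    by (simp add: image_image sym_mat_sym_entries sym cong: image_cong)
qed

section \<open>Columns of the two Jacobians\<close>

lemma partial_eqI:
  assumes "open U" and "\<theta> p \<in> U" and "\<And>t. t \<in> U \<Longrightarrow> F (\<theta>(p := t)) = f t"
    and "(f has_real_derivative d) (at (\<theta> p))"
  shows "partial F \<theta> p = d"
proof -
  have "((\<lambda>t. F (\<theta>(p := t))) has_real_derivative d) (at (\<theta> p))"
    using has_field_derivative_transform_within_open[OF assms(4,1,2)] assms(3) by simp
  then show ?thesis
    unfolding partial_def by (rule DERIV_imp_deriv)
qed

lemma matrix_inv_rank_one_update: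
  fixes A X :: "real^'n^'n"
  assumes AX: "A ** X = mat 1" and nz: "1 - s * X$l$k \<noteq> 0"
  shows "matrix_inv (A - s *\<^sub>R unit_mat k l) = X + (s / (1 - s * X$l$k)) *\<^sub>R (X ** unit_mat k l ** X)"
proof (rule matrix_inv_unique)
  define E where "E = unit_mat k l"
  define \<phi> where "\<phi> = s / (1 - s * X$l$k)"
  have "(A - s *\<^sub>R E) ** (X + \<phi> *\<^sub>R (X ** E ** X))
      = A ** X + \<phi> *\<^sub>R (A ** X ** E ** X) - s *\<^sub>R (E ** X)
        - (s * \<phi>) *\<^sub>R (E ** X ** E ** X)"
    by (simp add: matrix_diff_rdistrib matrix_add_ldistrib matrix_scalar_ac matrix_mul_assoc
        scalar_matrix_assoc[symmetric] algebra_simps)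
  also have "\<dots> = mat 1 + (\<phi> - s - s * \<phi> * X$l$k) *\<^sub>R (E ** X)"
    by (simp add: AX E_def unit_mat_mult_unit_mat scalar_matrix_assoc[symmetric] algebra_simps)
  also have "\<phi> - s - s * \<phi> * X$l$k = 0"
    using nz by (simp add: \<phi>_def field_simps)
  finally show "(A - s *\<^sub>R unit_mat k l)
      ** (X + (s / (1 - s * X$l$k)) *\<^sub>R (X ** unit_mat k l ** X)) = mat 1"
    by (simp add: E_def \<phi>_def)
qed

definition lambda_tangent :: "real^'n^'n \<Rightarrow> real^'n^'n \<Rightarrow> 'n \<Rightarrow> 'n \<Rightarrow> real^'n^'n"
  where
  "lambda_tangent L S k l =
     transpose (unit_mat k l) ** S ** (mat 1 - L) + transpose (mat 1 - L) ** S ** unit_mat k l"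

lemma transpose_lambda_tangent:
  "transpose S = S \<Longrightarrow> transpose (lambda_tangent L S k l) = lambda_tangent L S k l"
  by (simp add: lambda_tangent_def transpose_add matrix_transpose_mul matrix_mul_assoc add.commute)

lemma gmap_shift:
  "gmap (L + s *\<^sub>R unit_mat k l) S = gmap L S - s *\<^sub>R lambda_tangent L S k l
     + (s * s) *\<^sub>R (transpose (unit_mat k l) ** S ** unit_mat k l)"
proof -
  define A where "A = mat 1 - L"
  define E where "E = unit_mat k l"
  have "gmap (L + s *\<^sub>R E) S = transpose (A - s *\<^sub>R E) ** S ** (A - s *\<^sub>R E)"
    by (simp add: gmap_def A_def diff_diff_eq)
  also have "\<dots> = transpose A ** S ** A - s *\<^sub>R (transpose E ** S ** A + transpose A ** S ** E)
      + (s * s) *\<^sub>R (transpose E ** S ** E)"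
    by (simp add: transpose_diff transpose_scalar matrix_diff_rdistrib matrix_diff_ldistrib
        matrix_add_ldistrib matrix_scalar_ac scalar_matrix_assoc[symmetric] algebra_simps)
  finally show ?thesis
    by (simp add: gmap_def lambda_tangent_def A_def E_def)
qed

lemma phi_shift:
  fixes L W :: "real^'n^'n" and k l :: 'n and s :: real
  defines "X \<equiv> matrix_inv (mat 1 - L)"
  defines "P \<equiv> X ** unit_mat k l ** X"
  defines "\<phi> \<equiv> s / (1 - s * X$l$k)"
  assumes inv: "invertible (mat 1 - L)" and nz: "1 - s * X$l$k \<noteq> 0"
  shows "phi (L + s *\<^sub>R unit_mat k l) W
      = phi L W + \<phi> *\<^sub>R (transpose X ** lambda_tangent L (phi L W) k l ** X)
        + (\<phi> * \<phi>) *\<^sub>R (transpose P ** W ** P)"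
proof -
  define A where "A = mat 1 - L"
  have AX: "A ** X = mat 1" and XTAT: "transpose X ** transpose A = mat 1"
    using matrix_inv_right[OF inv] by (simp_all add: A_def X_def flip: matrix_transpose_mul)
  have AX': "M ** A ** X = M" for M :: "real^'n^'n"
    by (simp flip: matrix_mul_assoc add: AX)
  have "matrix_inv (mat 1 - (L + s *\<^sub>R unit_mat k l)) = X + \<phi> *\<^sub>R P"
    using matrix_inv_rank_one_update[OF AX nz] by (simp add: A_def P_def \<phi>_def diff_diff_eq)
  then have "phi (L + s *\<^sub>R unit_mat k l) W
      = transpose (X + \<phi> *\<^sub>R P) ** W ** (X + \<phi> *\<^sub>R P)"
    by (simp add: phi_def)
  also have "\<dots> = phi L W + \<phi> *\<^sub>R (transpose P ** W ** X + transpose X ** W ** P)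
      + (\<phi> * \<phi>) *\<^sub>R (transpose P ** W ** P)"
    by (simp add: phi_def X_def transpose_add transpose_scalar matrix_add_rdistrib matrix_add_ldistrib
        matrix_scalar_ac scalar_matrix_assoc[symmetric] algebra_simps)
  also have "transpose P ** W ** X + transpose X ** W ** P = transpose X ** lambda_tangent L (phi L W) k l ** X"
  proof -
    have "phi L W = transpose X ** W ** X"
      by (simp add: phi_def X_def)
    moreover have "lambda_tangent L M k l = transpose (unit_mat k l) ** M ** A + transpose A ** M ** unit_mat k l"
      for M
      by (simp add: lambda_tangent_def A_def)
    ultimately show ?thesis
      by (simp add: P_def matrix_add_ldistrib matrix_add_rdistrib matrix_transpose_mul matrix_mul_assoc AX' XTAT)
  qed
  finally show ?thesis .
qed

definition omega_idx :: "'v set set \<Rightarrow> 'v set set" where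
  "omega_idx B = {{i} | i. True} \<union> B"

lemma params_eq: "params D B = Inl ` D \<union> Inr ` omega_idx B"
  by (simp add: params_def omega_idx_def)

lemma Lam_of_update:
  assumes "\<And>i j. (i, j) \<notin> D \<Longrightarrow> L$i$j = 0" and "(k, l) \<in> D"
  shows "Lam_of D ((\<lambda>(i, j). L$i$j)((k, l) := t)) = L + (t - L$k$l) *\<^sub>R unit_mat k l"
  using assms by (auto simp: Lam_of_def unit_mat_def vec_eq_iff)

lemma theta_of_update_Inl:
  "(\<lambda>q. ((theta_of L W)(Inl (k, l) := t)) (Inl q)) = (\<lambda>(i, j). L$i$j)((k, l) := t)"
  by (auto simp: fun_eq_iff theta_of_def)

lemma Om_of_theta_of:
  assumes "PD_B B W"
  shows "Om_of B (\<lambda>e. theta_of L W (Inr e)) = W"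
  using assms sym_entry_symmetric[of W] by (auto simp: Om_of_def theta_of_def PD_B_def vec_eq_iff)

lemma Om_of_theta_of_update:
  assumes pd: "PD_B B W" and e': "e' \<in> omega_idx B"
  shows "Om_of B (\<lambda>e. ((theta_of L W)(Inr e' := t)) (Inr e))
           = W + (t - sym_entry W e') *\<^sub>R sym_mat (indicator {e'})"
proof -
  have sym: "sym_entry W {i, j} = W$i$j" for i j
    using pd by (simp add: PD_B_def sym_entry_symmetric)
  have "Om_of B (\<lambda>e. ((theta_of L W)(Inr e' := t)) (Inr e)) $ i $ j
      = (W + (t - sym_entry W e') *\<^sub>R sym_mat (indicator {e'})) $ i $ j" for i j
  proof (cases "{i, j} = e'")
    case True
    then have "i = j \<or> {i, j} \<in> B"
      using e' by (auto simp: omega_idx_def doubleton_eq_iff)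
    then show ?thesis
      using True sym[of i j] by (auto simp: Om_of_def theta_of_def sym_mat_def)
  next
    case False
    then show ?thesis
      using sym[of i j] pd by (auto simp: Om_of_def theta_of_def sym_mat_def PD_B_def)
  qed
  then show ?thesis
    by (simp add: vec_eq_iff)
qed

lemma phi_G_update_Inl:
  assumes "reg_D D L" and "PD_B B W" and "(k, l) \<in> D"
  shows "phi_G D B ((theta_of L W)(Inl (k, l) := t)) = phi (L + (t - L$k$l) *\<^sub>R unit_mat k l) W"
  unfolding phi_G_def theta_of_update_Inl
  using assms Om_of_theta_of[OF assms(2)] by (simp add: Lam_of_update reg_D_def)

lemma phi_G_update_Inr:
  assumes "reg_D D L" and "PD_B B W" and "e' \<in> omega_idx B"
  shows "phi_G D B ((theta_of L W)(Inr e' := t))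
           = phi L (W + (t - sym_entry W e') *\<^sub>R sym_mat (indicator {e'}))"
proof -
  have "Lam_of D (\<lambda>q. theta_of L W (Inl q)) = L"
    using assms(1) by (auto simp: Lam_of_def theta_of_def reg_D_def vec_eq_iff)
  then show ?thesis
    using Om_of_theta_of_update[OF assms(2,3)] by (simp add: phi_G_def)
qed

lemma J_G_Inl:
  fixes L W :: "real^'v::finite^'v"
  defines "X \<equiv> matrix_inv (mat 1 - L)"
  assumes rg: "reg_D D L" and pd: "PD_B B W" and kl: "(k, l) \<in> D"
  shows "J_G D B L W e (Inl (k, l)) = sym_entry (transpose X ** lambda_tangent L (phi L W) k l ** X) e"
proof -
  define T where "T = transpose X ** lambda_tangent L (phi L W) k l ** X"
  define t0 where "t0 = L$k$l"
  define c where "c = X$l$k"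
  define \<phi> where "\<phi> t = (t - t0) / (1 - (t - t0) * c)" for t
  define M2 where "M2 = transpose (X ** unit_mat k l ** X) ** W ** (X ** unit_mat k l ** X)"
  define U where "U = {t. 1 - (t - t0) * c \<noteq> 0}"
  have "open U"
    unfolding U_def by (intro open_Collect_neq continuous_intros)
  moreover have "theta_of L W (Inl (k, l)) \<in> U"
    by (simp add: U_def theta_of_def t0_def)
  moreover have "sym_entry (phi_G D B ((theta_of L W)(Inl (k, l) := t))) e
      = sym_entry (phi L W) e + \<phi> t * sym_entry T e + (\<phi> t * \<phi> t) * sym_entry M2 e" if "t \<in> U" for t
    using phi_shift[of L "t - t0" l k W] rg that
    by (simp add: phi_G_update_Inl[OF rg pd kl] reg_D_def U_def X_def c_def \<phi>_def M2_def t0_def T_def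
        sym_entry_add sym_entry_scaleR)
  moreover have "((\<lambda>t. sym_entry (phi L W) e + \<phi> t * sym_entry T e + (\<phi> t * \<phi> t) * sym_entry M2 e)
      has_real_derivative sym_entry T e) (at t0)"
    unfolding \<phi>_def by (auto intro!: derivative_eq_intros)
  ultimately show ?thesis
    unfolding J_G_def T_def[symmetric] by (intro partial_eqI[where U = U]) (simp_all add: theta_of_def t0_def)
qed

lemma J_G_Inr:
  fixes L W :: "real^'v::finite^'v"
  defines "X \<equiv> matrix_inv (mat 1 - L)"
  assumes rg: "reg_D D L" and pd: "PD_B B W" and e': "e' \<in> omega_idx B"
  shows "J_G D B L W e (Inr e') = sym_entry (transpose X ** sym_mat (indicator {e'}) ** X) e"
proof -
  define T where "T = transpose X ** sym_mat (indicator {e'}) ** X"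
  define t0 where "t0 = sym_entry W e'"
  have "sym_entry (phi_G D B ((theta_of L W)(Inr e' := t))) e = sym_entry (phi L W) e + (t - t0) * sym_entry T e"
    for t
    by (simp add: phi_G_update_Inr[OF rg pd e'] phi_def X_def t0_def T_def matrix_add_ldistrib
        matrix_add_rdistrib matrix_scalar_ac scalar_matrix_assoc[symmetric] sym_entry_add sym_entry_scaleR)
  moreover have "((\<lambda>t. sym_entry (phi L W) e + (t - t0) * sym_entry T e) has_real_derivative sym_entry T e) (at t0)"
    by (auto intro!: derivative_eq_intros)
  ultimately show ?thesis
    unfolding J_G_def T_def[symmetric] by (intro partial_eqI[where U = UNIV]) (simp_all add: theta_of_def t0_def)
qed

lemma bJ_eq_lambda_tangent:
  assumes "reg_D D L" and "(k, l) \<in> D"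
  shows "bJ D L S e (k, l) = - sym_entry (lambda_tangent L S k l) e"
proof -
  define E where "E = unit_mat k l"
  have "sym_entry (gmap (Lam_of D ((\<lambda>(i, j). L$i$j)((k, l) := t))) S) e
      = sym_entry (gmap L S) e - (t - L$k$l) * sym_entry (lambda_tangent L S k l) e
        + ((t - L$k$l) * (t - L$k$l)) * sym_entry (transpose E ** S ** E) e" for t
    using assms by (simp add: Lam_of_update reg_D_def gmap_shift E_def sym_entry_add sym_entry_diff sym_entry_scaleR)
  moreover have "((\<lambda>t. sym_entry (gmap L S) e - (t - L$k$l) * sym_entry (lambda_tangent L S k l) e
        + ((t - L$k$l) * (t - L$k$l)) * sym_entry (transpose E ** S ** E) e)
      has_real_derivative - sym_entry (lambda_tangent L S k l) e) (at (L$k$l))"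
    by (auto intro!: derivative_eq_intros)
  ultimately show ?thesis
    unfolding bJ_def by (intro partial_eqI[where U = UNIV]) simp_all
qed

section \<open>Counting the rank\<close>

lemma card_omega_idx:
  assumes "mixed_graph D (B :: 'v::finite set set)"
  shows "card (omega_idx B) = CARD('v) + card B"
proof -
  have "range (\<lambda>i. {i}) \<inter> B = {}"
    using assms by (fastforce simp: mixed_graph_def doubleton_eq_iff)
  moreover have "card (range (\<lambda>i::'v. {i})) = CARD('v)"
    by (simp add: card_image)
  ultimately show ?thesis
    by (simp add: omega_idx_def full_SetCompr_eq card_Un_disjoint)
qed

lemma omega_idx_Int_N_idx: "mixed_graph D B \<Longrightarrow> omega_idx B \<inter> N_idx B = {}"
  by (fastforce simp: omega_idx_def N_idx_def mixed_graph_def doubleton_eq_iff)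

lemma omega_idx_subset_sigma_idx: "mixed_graph D B \<Longrightarrow> omega_idx B \<subseteq> sigma_idx"
  by (fastforce simp: omega_idx_def sigma_idx_def mixed_graph_def)

lemma sigma_idx_subset_omega_idx_Un_N_idx: "sigma_idx \<subseteq> omega_idx B \<union> N_idx B"
  by (auto simp: sigma_idx_def omega_idx_def N_idx_def)

lemma N_idx_subset_sigma_idx: "N_idx B \<subseteq> sigma_idx"
  by (auto simp: sigma_idx_def N_idx_def)

lemma dim_uminus_image: "fun_space.dim (uminus ` F) = fun_space.dim (F :: ('a::finite \<Rightarrow> real) set)"
proof -
  have lin: "fun_linear (uminus :: ('a \<Rightarrow> real) \<Rightarrow> _)"
    by (rule fun_linearI) (simp_all add: fun_eq_iff)
  show ?thesis
    by (rule dim_image_eq_left_inverse[OF lin lin]) simp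
qed

definition param_tangent ::
    "real^'v::finite^'v \<Rightarrow> real^'v^'v \<Rightarrow> ('v \<times> 'v) + 'v set \<Rightarrow> real^'v^'v" where
  "param_tangent L S p =
     (case p of Inl (k, l) \<Rightarrow> lambda_tangent L S k l | Inr e \<Rightarrow> sym_mat (indicator {e}))"

lemma rank_J_G_eq:
  assumes "mixed_graph D B" and "reg_D D L" and "PD_B B W"
  shows "mat_rank sigma_idx (params D B) (J_G D B L W)
           = fun_space.dim (sym_entries ` param_tangent L (phi L W) ` params D B)"
proof -
  define X where "X = matrix_inv (mat 1 - L)"
  have "transpose (phi L W) = phi L W"
    using assms(3) by (simp add: PD_B_def phi_def congruence_symmetric)
  then have "fun_space.dim
        ((\<lambda>M. sym_entries (transpose X ** M ** X)) ` param_tangent L (phi L W) ` params D B)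
      = fun_space.dim (sym_entries ` param_tangent L (phi L W) ` params D B)"
    using assms(2)
    by (auto simp: X_def reg_D_def param_tangent_def transpose_lambda_tangent transpose_sym_mat
        intro!: dim_sym_entries_congruence invertible_matrix_inv split: sum.splits)
  moreover have "(\<lambda>p r. if r \<in> sigma_idx then J_G D B L W r p else 0) ` params D B
      = (\<lambda>M. sym_entries (transpose X ** M ** X)) ` param_tangent L (phi L W) ` params D B"
    using assms(2,3)
    by (auto simp: params_eq image_image param_tangent_def sym_entries_def fun_eq_iff X_def
        J_G_Inl J_G_Inr intro!: image_cong)
  ultimately show ?thesis
    by (simp add: mat_rank_def)
qed

lemma sym_entries_param_tangent_image:
  assumes "mixed_graph D B"
  shows "sym_entries ` param_tangent L S ` params D B
           = (\<lambda>e. indicator {e}) ` omega_idx B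
             \<union> (\<lambda>q. sym_entries (param_tangent L S (Inl q))) ` D"
proof -
  have "sym_entries (param_tangent L S (Inr e)) = indicator {e}" if "e \<in> omega_idx B" for e
    using that omega_idx_subset_sigma_idx[OF assms]
    by (auto simp: param_tangent_def sym_entries_sym_mat fun_eq_iff indicator_def)
  then have "(\<lambda>e. sym_entries (param_tangent L S (Inr e))) ` omega_idx B
      = (\<lambda>e. indicator {e}) ` omega_idx B"
    by (rule image_cong[OF refl])
  then show ?thesis
    by (simp add: params_eq image_Un image_image Un_commute)
qed

lemma rank_bJ_eq:
  assumes "reg_D D L"
  shows "mat_rank (N_idx B) D (bJ D L S)
           = fun_space.dim ((\<lambda>f e. if e \<in> N_idx B then f e else 0)
                              ` (\<lambda>q. sym_entries (param_tangent L S (Inl q))) ` D)"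
proof -
  have "(\<lambda>q r. if r \<in> N_idx B then bJ D L S r q else 0) ` D
      = uminus ` (\<lambda>f e. if e \<in> N_idx B then f e else 0)
          ` (\<lambda>q. sym_entries (param_tangent L S (Inl q))) ` D"
    using assms N_idx_subset_sigma_idx[of B]
    by (auto simp: param_tangent_def image_image sym_entries_def fun_eq_iff bJ_eq_lambda_tangent
        intro!: image_cong)
  then show ?thesis
    by (simp add: mat_rank_def dim_uminus_image)
qed

theorem lemma1:
  fixes D :: "('v::finite \<times> 'v) set" and B :: "'v set set"
    and L W S :: "real^'v^'v"
  assumes "mixed_graph D B"
    and "reg_D D L"
    and "PD_B B W"
    and "S = phi L W"
  shows "mat_rank sigma_idx (params D B) (J_G D B L W)
           = mat_rank (N_idx B) D (bJ D L S) + card B + CARD('v)"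
proof -
  let ?T = "(\<lambda>q. sym_entries (param_tangent L S (Inl q))) ` D"
  have "mat_rank sigma_idx (params D B) (J_G D B L W)
      = fun_space.dim ((\<lambda>e. indicator {e}) ` omega_idx B \<union> ?T)"
    using rank_J_G_eq[OF assms(1-3)] sym_entries_param_tangent_image[OF assms(1)] assms(4) by simp
  also have "\<dots> = card (omega_idx B) + fun_space.dim ((\<lambda>f e. if e \<in> N_idx B then f e else 0) ` ?T)"
    using sigma_idx_subset_omega_idx_Un_N_idx[of B]
    by (intro dim_indicators_Un omega_idx_Int_N_idx[OF assms(1)]) (auto simp: sym_entries_def)
  finally show ?thesis
    using rank_bJ_eq[OF assms(2)] card_omega_idx[OF assms(1)] by simp
qed

end
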